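(* Let $B\ge 1$, $S\ge 1$, $r,\lambda_{BB},\lambda_{SS},\lambda_{BS}>0$, and let $V(k_b,k_s)$, for $k_b\in\{0,\dots,B\}$ and $k_s\in\{1,\dots,S\}$, be defined by the recursion in the context. Then for all $k_b\in\{0,\dots,B-1\}$ and $k_s\in\{1,\dots,S\}$, $$V(k_b,k_s)-V(k_b+1,k_s)\le V(0,1)-V(1,1).$$
   Context: For $k_b\in\{0,\dots,B\}$ and $k_s\in\{1,\dots,S\}$, set $V(B,k_s)=0$, and for $k_b\le B-1$ define recursively $$V(k_b,k_s)=\frac{\lambda_{BB}k_b(B-k_b)V(k_b+1,k_s)+\lambda_{SS}(k_s-1)(S-k_s)V(k_b,k_s+1)+\lambda_{BS}k_b(S-k_s)V(k_b,k_s+1)+\lambda_{BS}k_s(B-k_b)V(k_b+1,k_s)+\lambda_{BS}(B-k_b)}{r+\lambda_{BB}k_b(B-k_b)+\lambda_{SS}(k_s-1)(S-k_s)+\lambda_{BS}k_b(S-k_s)+\lambda_{BS}k_s(B-k_b)}$$ (terms with coefficient $S-k_s=0$ are absent when $k_s=S$). Interpretation: in a market with $B$ buyers and $S$ sellers where each buyer–seller pair meets at Poisson rate $\lambda_{BS}$, each buyer pair at rate $\lambda_{BB}$, each seller pair at rate $\lambda_{SS}$ (independently), and information that a fixed seller $s$ is guilty spreads whenever an informed player meets an uninformed one (with $s$ herself counted among the $k_s$ informed sellers, and $s$'s own meetings with other sellers not spreading it), $V(k_b,k_s)$ is the expected discounted ($e^{-rt}$) number of meetings of $s$ with buyers who are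 not yet informed, starting from $k_b$ informed buyers and $k_s$ informed sellers. *)

theory Defs
  imports Complex_Main
begin

text \<open>Meaningful for kb in {0..B}, ks in {1..S}.
  Terms with coefficient (S - ks) are omitted when ks = S (ks >= S), which the
  guard below implements; for ks < S the factor S - ks is the real difference.\<close>

function V :: "nat \<Rightarrow> nat \<Rightarrow> real \<Rightarrow> real \<Rightarrow> real \<Rightarrow> real \<Rightarrow> nat \<Rightarrow> nat \<Rightarrow> real" where
  "V B S r lBB lSS lBS kb ks =
    (if B \<le> kb then 0
     else
       (let up_b = V B S r lBB lSS lBS (kb + 1) ks;
            up_s = (if ks < S then V B S r lBB lSS lBS kb (ks + 1) else 0);
            kbr = real kb; ksr = real ks; Br = real B; Sr = real S
        in (lBB * kbr * (Br - kbr) * up_b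
            + lSS * (ksr - 1) * (Sr - ksr) * up_s
            + lBS * kbr * (Sr - ksr) * up_s
            + lBS * ksr * (Br - kbr) * up_b
            + lBS * (Br - kbr))
           / (r + lBB * kbr * (Br - kbr) + lSS * (ksr - 1) * (Sr - ksr)
              + lBS * kbr * (Sr - ksr) + lBS * ksr * (Br - kbr))))"
  by pat_completeness auto
termination
  by (relation "measure (\<lambda>(B, S, r, lBB, lSS, lBS, kb, ks). (B - kb) + (S - ks))") auto

end

theory Submission
  imports Defs
begin

text \<open>Write \<open>\<Delta>\<^sub>b k j = v k j - v (k + 1) j\<close> and \<open>\<Delta>\<^sub>s k j = v k j - v k (j + 1)\<close>.
  By backward induction over the states, ordered by \<open>(B - k) + (S - j)\<close>, the gaps
  \<open>\<Delta>\<^sub>b\<close> and \<open>\<Delta>\<^sub>s\<close> are nonnegative, \<open>\<Delta>\<^sub>b\<close> decreases in both coordinates and \<open>\<Delta>\<^sub>s\<close> decreases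
  in \<open>j\<close>. For each of these five quantities, subtracting the recursion at neighbouring
  states writes \<open>\<rho> k j\<close> times it, with \<open>\<rho>\<close> the discount rate plus the total transition
  rate, as a combination with nonnegative coefficients of quantities of the same five
  kinds at later states. The theorem is the chain \<open>\<Delta>\<^sub>b k j \<le> \<Delta>\<^sub>b 0 j \<le> \<Delta>\<^sub>b 0 1\<close>.\<close>

text \<open>The rates at which the numbers of informed buyers and informed sellers grow in state
  \<open>(k, j)\<close>; the parameters \<open>a\<close>, \<open>b\<close>, \<open>c\<close> are \<open>\<lambda>\<^sub>B\<^sub>B\<close>, \<open>\<lambda>\<^sub>S\<^sub>S\<close>, \<open>\<lambda>\<^sub>B\<^sub>S\<close>.\<close>

definition buyer_rate :: "nat \<Rightarrow> real \<Rightarrow> real \<Rightarrow> nat \<Rightarrow> nat \<Rightarrow> real" where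
  "buyer_rate B a c k j = a * real k * (real B - real k) + c * real j * (real B - real k)"

definition seller_rate :: "nat \<Rightarrow> real \<Rightarrow> real \<Rightarrow> nat \<Rightarrow> nat \<Rightarrow> real" where
  "seller_rate S b c k j = b * (real j - 1) * (real S - real j) + c * real k * (real S - real j)"

lemma mult_diff_of_nat_nonneg:
  assumes "0 \<le> d" "j \<le> S" "j < S \<Longrightarrow> 0 \<le> x"
  shows "0 \<le> d * (real S - real j) * x"
  using assms by (cases "j < S") auto

lemma buyer_rate_nonneg: "0 \<le> a \<Longrightarrow> 0 \<le> c \<Longrightarrow> k \<le> B \<Longrightarrow> 0 \<le> buyer_rate B a c k j"
  unfolding buyer_rate_def by (intro add_nonneg_nonneg mult_nonneg_nonneg) auto

lemma seller_rate_mult_nonneg: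
  assumes "0 \<le> b" "0 \<le> c" "1 \<le> j" "j \<le> S" "j < S \<Longrightarrow> 0 \<le> x"
  shows "0 \<le> seller_rate S b c k j * x"
proof -
  have "seller_rate S b c k j * x = (b * (real j - 1) + c * real k) * (real S - real j) * x"
    unfolding seller_rate_def by (simp add: algebra_simps)
  also have "\<dots> \<ge> 0"
    using assms by (intro mult_diff_of_nat_nonneg add_nonneg_nonneg mult_nonneg_nonneg) auto
  finally show ?thesis .
qed

locale spread_recursion =
  fixes B S :: nat and r a b c :: real and v :: "nat \<Rightarrow> nat \<Rightarrow> real"
  assumes params: "0 < r" "0 \<le> a" "0 \<le> b" "0 \<le> c"
    and v_absorbing: "\<And>k j. B \<le> k \<Longrightarrow> v k j = 0"
    and v_rec: "\<And>k j. k \<le> B \<Longrightarrow> 1 \<le> j \<Longrightarrow> j \<le> S \<Longrightarrow>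
      (r + buyer_rate B a c k j + seller_rate S b c k j) * v k j
      = buyer_rate B a c k j * v (Suc k) j + seller_rate S b c k j * v k (Suc j) + c * (real B - real k)"
begin

abbreviation "\<beta> \<equiv> buyer_rate B a c"
abbreviation "\<sigma> \<equiv> seller_rate S b c"
abbreviation "\<rho> k j \<equiv> r + \<beta> k j + \<sigma> k j"
abbreviation "\<Delta>\<^sub>b k j \<equiv> v k j - v (Suc k) j"
abbreviation "\<Delta>\<^sub>s k j \<equiv> v k j - v k (Suc j)"

lemma beta_nonneg: "k \<le> B \<Longrightarrow> 0 \<le> \<beta> k j"
  using params by (intro buyer_rate_nonneg) auto

text \<open>\<open>v k (S + 1)\<close> lies outside the state space; wherever it enters, it is multiplied by
  a factor \<open>S - j\<close> that vanishes at \<open>j = S\<close>.\<close>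

lemma sigma_mult_nonneg: "1 \<le> j \<Longrightarrow> j \<le> S \<Longrightarrow> (j < S \<Longrightarrow> 0 \<le> x) \<Longrightarrow> 0 \<le> \<sigma> k j * x"
  using params by (intro seller_rate_mult_nonneg) auto

lemma nonneg_if_rho_mult_nonneg:
  assumes "0 \<le> \<rho> k j * x" "k \<le> B" "1 \<le> j" "j \<le> S"
  shows "0 \<le> x"
proof -
  have "0 < \<rho> k j"
    using beta_nonneg[of k j] sigma_mult_nonneg[of j 1 k] params assms by simp
  then show ?thesis
    using assms(1) by (simp add: zero_le_mult_iff)
qed

lemma gap_b_recursion:
  assumes "k < B" "1 \<le> j" "j \<le> S"
  shows "\<rho> k j * \<Delta>\<^sub>b k j = \<beta> (Suc k) j * \<Delta>\<^sub>b (Suc k) j + \<sigma> k j * \<Delta>\<^sub>b k (Suc j)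
    + c * (real S - real j) * \<Delta>\<^sub>s (Suc k) j + c"
  using v_rec[of k j] v_rec[of "Suc k" j] assms
  unfolding buyer_rate_def seller_rate_def by (simp add: algebra_simps)

lemma gap_s_recursion:
  assumes "k < B" "1 \<le> j" "j < S"
  shows "\<rho> k j * \<Delta>\<^sub>s k j = \<beta> k j * \<Delta>\<^sub>s (Suc k) j + \<sigma> k (Suc j) * \<Delta>\<^sub>s k (Suc j)
    + c * (real B - real k) * \<Delta>\<^sub>b k (Suc j)"
  using v_rec[of k j] v_rec[of k "Suc j"] assms
  unfolding buyer_rate_def seller_rate_def by (simp add: algebra_simps)

text \<open>The terms \<open>2 * a\<close> and \<open>2 * b\<close> below come from the constant second differences
  \<open>2 * \<beta> (k + 1) j - \<beta> k j - \<beta> (k + 2) j = 2 * a\<close> and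
  \<open>2 * \<sigma> k (j + 1) - \<sigma> k j - \<sigma> k (j + 2) = 2 * b\<close>.\<close>

lemma gap_b_diff_b_recursion:
  assumes "Suc k < B" "1 \<le> j" "j \<le> S"
  shows "\<rho> k j * (\<Delta>\<^sub>b k j - \<Delta>\<^sub>b (Suc k) j)
    = \<beta> (Suc (Suc k)) j * (\<Delta>\<^sub>b (Suc k) j - \<Delta>\<^sub>b (Suc (Suc k)) j)
      + \<sigma> k j * (\<Delta>\<^sub>b k (Suc j) - \<Delta>\<^sub>b (Suc k) (Suc j)) + 2 * a * \<Delta>\<^sub>b (Suc k) j
      + 2 * c * (real S - real j) * (\<Delta>\<^sub>b (Suc k) j - \<Delta>\<^sub>b (Suc k) (Suc j))"
  using v_rec[of k j] v_rec[of "Suc k" j] v_rec[of "Suc (Suc k)" j] assms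
  unfolding buyer_rate_def seller_rate_def by (simp add: algebra_simps)

lemma gap_b_diff_s_recursion:
  assumes "k < B" "1 \<le> j" "j < S"
  shows "\<rho> k j * (\<Delta>\<^sub>b k j - \<Delta>\<^sub>b k (Suc j))
    = \<beta> (Suc k) j * (\<Delta>\<^sub>b (Suc k) j - \<Delta>\<^sub>b (Suc k) (Suc j))
      + \<sigma> k (Suc j) * (\<Delta>\<^sub>b k (Suc j) - \<Delta>\<^sub>b k (Suc (Suc j))) + c * \<Delta>\<^sub>b (Suc k) (Suc j)
      + c * \<Delta>\<^sub>s (Suc k) j + c * (real S - real (Suc j)) * (\<Delta>\<^sub>s (Suc k) j - \<Delta>\<^sub>s (Suc k) (Suc j))
      + c * (real B - real k) * (\<Delta>\<^sub>b k (Suc j) - \<Delta>\<^sub>b (Suc k) (Suc j))"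
  using v_rec[of k j] v_rec[of "Suc k" j] v_rec[of k "Suc j"] v_rec[of "Suc k" "Suc j"] assms
  unfolding buyer_rate_def seller_rate_def by (simp add: algebra_simps)

lemma gap_s_diff_s_recursion:
  assumes "k < B" "1 \<le> j" "Suc j < S"
  shows "\<rho> k j * (\<Delta>\<^sub>s k j - \<Delta>\<^sub>s k (Suc j))
    = \<beta> k j * (\<Delta>\<^sub>s (Suc k) j - \<Delta>\<^sub>s (Suc k) (Suc j))
      + 2 * c * (real B - real k) * (\<Delta>\<^sub>b k (Suc j) - \<Delta>\<^sub>b k (Suc (Suc j)))
      + 2 * b * \<Delta>\<^sub>s k (Suc j) + \<sigma> k (Suc (Suc j)) * (\<Delta>\<^sub>s k (Suc j) - \<Delta>\<^sub>s k (Suc (Suc j)))"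
  using v_rec[of k j] v_rec[of k "Suc j"] v_rec[of k "Suc (Suc j)"] assms
  unfolding buyer_rate_def seller_rate_def by (simp add: algebra_simps)

definition shape_invariant :: "nat \<Rightarrow> nat \<Rightarrow> bool" where
  "shape_invariant k j \<longleftrightarrow>
     0 \<le> \<Delta>\<^sub>b k j \<and> (j < S \<longrightarrow> 0 \<le> \<Delta>\<^sub>s k j) \<and>
     \<Delta>\<^sub>b (Suc k) j \<le> \<Delta>\<^sub>b k j \<and> (j < S \<longrightarrow> \<Delta>\<^sub>b k (Suc j) \<le> \<Delta>\<^sub>b k j) \<and>
     (Suc j < S \<longrightarrow> \<Delta>\<^sub>s k (Suc j) \<le> \<Delta>\<^sub>s k j)"

lemma shape_invariantD:
  assumes "shape_invariant k j"
  shows "0 \<le> \<Delta>\<^sub>b k j" "j < S \<Longrightarrow> 0 \<le> \<Delta>\<^sub>s k j" "\<Delta>\<^sub>b (Suc k) j \<le> \<Delta>\<^sub>b k j"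
    "j < S \<Longrightarrow> \<Delta>\<^sub>b k (Suc j) \<le> \<Delta>\<^sub>b k j" "Suc j < S \<Longrightarrow> \<Delta>\<^sub>s k (Suc j) \<le> \<Delta>\<^sub>s k j"
  using assms unfolding shape_invariant_def by blast+

lemma gap_b_nonneg_step:
  assumes "k < B" "1 \<le> j" "j \<le> S"
    and next_b: "shape_invariant (Suc k) j" and next_s: "j < S \<Longrightarrow> shape_invariant k (Suc j)"
  shows "0 \<le> \<Delta>\<^sub>b k j"
proof -
  have "0 \<le> \<beta> (Suc k) j * \<Delta>\<^sub>b (Suc k) j"
    using assms shape_invariantD(1)[OF next_b] by (intro mult_nonneg_nonneg beta_nonneg) auto
  moreover have "0 \<le> \<sigma> k j * \<Delta>\<^sub>b k (Suc j)"
    using assms shape_invariantD(1)[OF next_s] by (intro sigma_mult_nonneg)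
  moreover have "0 \<le> c * (real S - real j) * \<Delta>\<^sub>s (Suc k) j"
    using assms params shape_invariantD(2)[OF next_b] by (intro mult_diff_of_nat_nonneg) auto
  ultimately have "0 \<le> \<rho> k j * \<Delta>\<^sub>b k j"
    unfolding gap_b_recursion[OF assms(1-3)] using params by linarith
  then show ?thesis by (rule nonneg_if_rho_mult_nonneg) (use assms in auto)
qed

lemma gap_s_nonneg_step:
  assumes "k < B" "1 \<le> j" "j < S"
    and next_b: "shape_invariant (Suc k) j" and next_s: "shape_invariant k (Suc j)"
  shows "0 \<le> \<Delta>\<^sub>s k j"
proof -
  have "0 \<le> \<beta> k j * \<Delta>\<^sub>s (Suc k) j"
    using assms shape_invariantD(2)[OF next_b] by (intro mult_nonneg_nonneg beta_nonneg) auto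
  moreover have "0 \<le> \<sigma> k (Suc j) * \<Delta>\<^sub>s k (Suc j)"
    using assms shape_invariantD(2)[OF next_s] by (intro sigma_mult_nonneg) auto
  moreover have "0 \<le> c * (real B - real k) * \<Delta>\<^sub>b k (Suc j)"
    using assms params shape_invariantD(1)[OF next_s] by (intro mult_nonneg_nonneg) auto
  ultimately have "0 \<le> \<rho> k j * \<Delta>\<^sub>s k j"
    unfolding gap_s_recursion[OF assms(1-3)] by linarith
  then show ?thesis by (rule nonneg_if_rho_mult_nonneg) (use assms in auto)
qed

lemma gap_b_antitone_b_step:
  assumes "k < B" "1 \<le> j" "j \<le> S"
    and next_b: "shape_invariant (Suc k) j" and next_s: "j < S \<Longrightarrow> shape_invariant k (Suc j)"
  shows "\<Delta>\<^sub>b (Suc k) j \<le> \<Delta>\<^sub>b k j"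
proof (cases "Suc k < B")
  case False
  then show ?thesis
    using gap_b_nonneg_step[OF assms] v_absorbing[of "Suc k" j] v_absorbing[of "Suc (Suc k)" j] by simp
next
  case True
  have "0 \<le> \<beta> (Suc (Suc k)) j * (\<Delta>\<^sub>b (Suc k) j - \<Delta>\<^sub>b (Suc (Suc k)) j)"
    using True shape_invariantD(3)[OF next_b] by (intro mult_nonneg_nonneg beta_nonneg) auto
  moreover have "0 \<le> \<sigma> k j * (\<Delta>\<^sub>b k (Suc j) - \<Delta>\<^sub>b (Suc k) (Suc j))"
    using assms shape_invariantD(3)[OF next_s] by (intro sigma_mult_nonneg) auto
  moreover have "0 \<le> 2 * a * \<Delta>\<^sub>b (Suc k) j"
    using params shape_invariantD(1)[OF next_b] by (intro mult_nonneg_nonneg) auto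
  moreover have "0 \<le> 2 * c * (real S - real j) * (\<Delta>\<^sub>b (Suc k) j - \<Delta>\<^sub>b (Suc k) (Suc j))"
    using assms params shape_invariantD(4)[OF next_b] by (intro mult_diff_of_nat_nonneg) auto
  ultimately have "0 \<le> \<rho> k j * (\<Delta>\<^sub>b k j - \<Delta>\<^sub>b (Suc k) j)"
    unfolding gap_b_diff_b_recursion[OF True assms(2,3)] by linarith
  then have "0 \<le> \<Delta>\<^sub>b k j - \<Delta>\<^sub>b (Suc k) j"
    by (rule nonneg_if_rho_mult_nonneg) (use assms in auto)
  then show ?thesis by linarith
qed

lemma gap_b_antitone_s_step:
  assumes "k < B" "1 \<le> j" "j < S"
    and next_b: "shape_invariant (Suc k) j" and next_s: "shape_invariant k (Suc j)"
    and next_bs: "shape_invariant (Suc k) (Suc j)"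
  shows "\<Delta>\<^sub>b k (Suc j) \<le> \<Delta>\<^sub>b k j"
proof -
  have "0 \<le> \<beta> (Suc k) j * (\<Delta>\<^sub>b (Suc k) j - \<Delta>\<^sub>b (Suc k) (Suc j))"
    using assms shape_invariantD(4)[OF next_b] by (intro mult_nonneg_nonneg beta_nonneg) auto
  moreover have "0 \<le> \<sigma> k (Suc j) * (\<Delta>\<^sub>b k (Suc j) - \<Delta>\<^sub>b k (Suc (Suc j)))"
    using assms shape_invariantD(4)[OF next_s] by (intro sigma_mult_nonneg) auto
  moreover have "0 \<le> c * \<Delta>\<^sub>b (Suc k) (Suc j)"
    using params shape_invariantD(1)[OF next_bs] by (intro mult_nonneg_nonneg) auto
  moreover have "0 \<le> c * \<Delta>\<^sub>s (Suc k) j"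
    using assms params shape_invariantD(2)[OF next_b] by (intro mult_nonneg_nonneg) auto
  moreover have "0 \<le> c * (real S - real (Suc j)) * (\<Delta>\<^sub>s (Suc k) j - \<Delta>\<^sub>s (Suc k) (Suc j))"
    using assms params shape_invariantD(5)[OF next_b] by (intro mult_diff_of_nat_nonneg) auto
  moreover have "0 \<le> c * (real B - real k) * (\<Delta>\<^sub>b k (Suc j) - \<Delta>\<^sub>b (Suc k) (Suc j))"
    using assms params shape_invariantD(3)[OF next_s] by (intro mult_nonneg_nonneg) auto
  ultimately have "0 \<le> \<rho> k j * (\<Delta>\<^sub>b k j - \<Delta>\<^sub>b k (Suc j))"
    unfolding gap_b_diff_s_recursion[OF assms(1-3)] by linarith
  then have "0 \<le> \<Delta>\<^sub>b k j - \<Delta>\<^sub>b k (Suc j)"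
    by (rule nonneg_if_rho_mult_nonneg) (use assms in auto)
  then show ?thesis by linarith
qed

lemma gap_s_antitone_s_step:
  assumes "k < B" "1 \<le> j" "Suc j < S"
    and next_b: "shape_invariant (Suc k) j" and next_s: "shape_invariant k (Suc j)"
  shows "\<Delta>\<^sub>s k (Suc j) \<le> \<Delta>\<^sub>s k j"
proof -
  have "0 \<le> \<beta> k j * (\<Delta>\<^sub>s (Suc k) j - \<Delta>\<^sub>s (Suc k) (Suc j))"
    using assms shape_invariantD(5)[OF next_b] by (intro mult_nonneg_nonneg beta_nonneg) auto
  moreover have "0 \<le> 2 * c * (real B - real k) * (\<Delta>\<^sub>b k (Suc j) - \<Delta>\<^sub>b k (Suc (Suc j)))"
    using assms params shape_invariantD(4)[OF next_s] by (intro mult_nonneg_nonneg) auto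
  moreover have "0 \<le> 2 * b * \<Delta>\<^sub>s k (Suc j)"
    using assms params shape_invariantD(2)[OF next_s] by (intro mult_nonneg_nonneg) auto
  moreover have "0 \<le> \<sigma> k (Suc (Suc j)) * (\<Delta>\<^sub>s k (Suc j) - \<Delta>\<^sub>s k (Suc (Suc j)))"
    using assms shape_invariantD(5)[OF next_s] by (intro sigma_mult_nonneg) auto
  ultimately have "0 \<le> \<rho> k j * (\<Delta>\<^sub>s k j - \<Delta>\<^sub>s k (Suc j))"
    unfolding gap_s_diff_s_recursion[OF assms(1-3)] by linarith
  then have "0 \<le> \<Delta>\<^sub>s k j - \<Delta>\<^sub>s k (Suc j)"
    by (rule nonneg_if_rho_mult_nonneg) (use assms in auto)
  then show ?thesis by linarith
qed

lemma shape_invariant_holds: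
  assumes "k \<le> B" "1 \<le> j" "j \<le> S"
  shows "shape_invariant k j"
  using assms
proof (induction "(B - k) + (S - j)" arbitrary: k j rule: less_induct)
  case less
  show ?case
  proof (cases "k < B")
    case False
    then show ?thesis by (simp add: shape_invariant_def v_absorbing)
  next
    case True
    have later: "shape_invariant k' j'"
      if "k \<le> k'" "j \<le> j'" "k < k' \<or> j < j'" "k' \<le> B" "j' \<le> S" for k' j'
      using less that by (intro less.hyps) auto
    have next_b: "shape_invariant (Suc k) j" and next_s: "j < S \<Longrightarrow> shape_invariant k (Suc j)"
      and next_bs: "j < S \<Longrightarrow> shape_invariant (Suc k) (Suc j)"
      using True less.prems by (auto intro: later)
    note steps = gap_b_nonneg_step gap_s_nonneg_step gap_b_antitone_b_step
      gap_b_antitone_s_step gap_s_antitone_s_step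
    show ?thesis
      unfolding shape_invariant_def
      using steps[OF True] less.prems next_b next_s next_bs by auto
  qed
qed

lemma gap_b_le_initial_gap:
  assumes "k < B" "1 \<le> j" "j \<le> S"
  shows "\<Delta>\<^sub>b k j \<le> \<Delta>\<^sub>b 0 1"
proof -
  have "\<Delta>\<^sub>b k j \<le> \<Delta>\<^sub>b 0 j"
    using \<open>k < B\<close>
  proof (induction k)
    case (Suc k)
    then show ?case
      using shape_invariantD(3)[OF shape_invariant_holds[of k j]] assms by simp
  qed simp
  also have "\<dots> \<le> \<Delta>\<^sub>b 0 1"
    using \<open>1 \<le> j\<close> \<open>j \<le> S\<close>
  proof (induction j rule: dec_induct)
    case (step j)
    then show ?case
      using shape_invariantD(4)[OF shape_invariant_holds[of 0 j]] assms by simp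
  qed simp
  finally show ?thesis .
qed

end

text \<open>As a simp rule, the unconditional equation \<open>V.simps\<close> unfolds \<open>V\<close> at every neighbouring state.\<close>

declare V.simps [simp del]

lemma V_absorbing: "B \<le> k \<Longrightarrow> V B S r a b c k j = 0"
  by (subst V.simps) simp

lemma V_recursion:
  assumes "0 < r" "0 \<le> a" "0 \<le> b" "0 \<le> c" "k \<le> B" "1 \<le> j" "j \<le> S"
  shows "(r + buyer_rate B a c k j + seller_rate S b c k j) * V B S r a b c k j
    = buyer_rate B a c k j * V B S r a b c (Suc k) j + seller_rate S b c k j * V B S r a b c k (Suc j)
      + c * (real B - real k)"
proof (cases "k < B")
  case False
  with assms show ?thesis by (simp add: V_absorbing buyer_rate_def)
next
  case True
  let ?\<beta> = "buyer_rate B a c k j" and ?\<sigma> = "seller_rate S b c k j"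
  have "V B S r a b c k j = (?\<beta> * V B S r a b c (Suc k) j
      + ?\<sigma> * (if j < S then V B S r a b c k (Suc j) else 0) + c * (real B - real k)) / (r + ?\<beta> + ?\<sigma>)"
    using True by (subst V.simps) (simp add: Let_def buyer_rate_def seller_rate_def algebra_simps)
  also have "?\<sigma> * (if j < S then V B S r a b c k (Suc j) else 0) = ?\<sigma> * V B S r a b c k (Suc j)"
    using assms by (simp add: seller_rate_def)
  finally have "V B S r a b c k j = (?\<beta> * V B S r a b c (Suc k) j + ?\<sigma> * V B S r a b c k (Suc j)
      + c * (real B - real k)) / (r + ?\<beta> + ?\<sigma>)" .
  moreover have "0 < r + ?\<beta> + ?\<sigma>"
    using assms buyer_rate_nonneg[of a c k B j] seller_rate_mult_nonneg[of b c j S 1 k] by simp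
  ultimately show ?thesis by (simp add: field_simps)
qed

lemma spread_recursion_V:
  "0 < r \<Longrightarrow> 0 \<le> a \<Longrightarrow> 0 \<le> b \<Longrightarrow> 0 \<le> c \<Longrightarrow> spread_recursion B S r a b c (V B S r a b c)"
  by unfold_locales (auto intro: V_absorbing V_recursion)

theorem mainTheorem3:
  fixes B S :: nat and r lBB lSS lBS :: real and kb ks :: nat
  assumes "B \<ge> 1" and "S \<ge> 1"
    and "r > 0" and "lBB > 0" and "lSS > 0" and "lBS > 0"
    and "kb \<le> B - 1" and "1 \<le> ks" and "ks \<le> S"
  shows "V B S r lBB lSS lBS kb ks - V B S r lBB lSS lBS (kb + 1) ks
         \<le> V B S r lBB lSS lBS 0 1 - V B S r lBB lSS lBS 1 1"
proof -
  interpret spread_recursion B S r lBB lSS lBS "V B S r lBB lSS lBS"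
    using assms by (intro spread_recursion_V) auto
  have "kb < B" using assms by linarith
  then show ?thesis using gap_b_le_initial_gap[of kb ks] assms by simp
qed

end
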